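(* Let $k\geq 2$ and let $G$ and $G'$ be the graphs defined below. Then $Z(G)\leq 4k-2$ and $Z(G')\leq 4k-3$.
   Context: Let $k\geq 2$. Let $H$ be the graph with vertex set $\{0,1,\ldots,3k-2\}$ in which vertex $i$ is adjacent to $k+i,k+i+1,\ldots,2k+i-1$ (indices mod $3k-1$). Let $A$ be a clique with vertices $a_0,\ldots,a_k$, $B$ a coclique (independent set) with vertices $b_0,\ldots,b_k$, and $C$ a coclique with vertices $c_1,\ldots,c_{k-1}$. The graph $G$ is the disjoint union of $H,A,B,C$ together with the following edges: (i) $a_i\sim b_j$ for all $0\leq i,j\leq k$ with $i\neq j$; (ii) $c_i\sim j$ for all $1\leq i\leq k-1$ and $j\in\{0,k,k+1,\ldots,3k-2\}$; (iii) $b_i\sim j$ for all $0\leq i\leq k-1$ and $j\in\{1,\ldots,k-1\}$, and $b_k\sim j$ for all $j\in\{2k,\ldots,3k-2\}$; (iv) $b_i\sim k+i-1$ for $1\leq i\leq k$, and $b_0\sim 0$. ($G$ is $2k$-regular of order $6k$.) Let $X=V(A)\cup V(H)$. The graph $G'$ is obtained from $G$ by Godsil–McKay switching with respect to $X$: for every vertex $y\in V(B)\cup V(C)$ (each such $y$ has exactly $|X|/2$ neighbors in $X$), delete all edges between $y$ and $X$ and join $y$ instead to the $|X|/2$ vertices of $X$ that were not adjacent to $y$ in $G$; all other edges are unchanged. The zero forcing number $Z(\cdot)$ is the minimum size of a set $S$ of vertices such that, if the vertices of $S$ are colored blue and all others white, repeated application of the rule "a blue vertex with exactly one white neighbor forces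 that neighbor to become blue" eventually makes every vertex blue. *)

theory Defs
  imports Main
begin

definition force_step :: "'a set \<Rightarrow> ('a \<Rightarrow> 'a \<Rightarrow> bool) \<Rightarrow> 'a set \<Rightarrow> 'a set \<Rightarrow> bool" where
  "force_step V E Bl Bl' \<longleftrightarrow>
     (\<exists>u\<in>Bl. \<exists>w\<in>V - Bl. E u w \<and> (\<forall>x\<in>V. E u x \<and> x \<noteq> w \<longrightarrow> x \<in> Bl) \<and> Bl' = insert w Bl)"

definition zero_forcing_set :: "'a set \<Rightarrow> ('a \<Rightarrow> 'a \<Rightarrow> bool) \<Rightarrow> 'a set \<Rightarrow> bool" where
  "zero_forcing_set V E S \<longleftrightarrow> S \<subseteq> V \<and> (force_step V E)\<^sup>*\<^sup>* S V"

definition zero_forcing_number :: "'a set \<Rightarrow> ('a \<Rightarrow> 'a \<Rightarrow> bool) \<Rightarrow> nat" where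
  "zero_forcing_number V E = (LEAST n. \<exists>S. zero_forcing_set V E S \<and> card S = n)"

definition gm_switch :: "'a set \<Rightarrow> ('a \<Rightarrow> 'a \<Rightarrow> bool) \<Rightarrow> 'a set \<Rightarrow> 'a \<Rightarrow> 'a \<Rightarrow> bool" where
  "gm_switch V E X u v \<longleftrightarrow> u \<in> V \<and> v \<in> V \<and>
     (if (u \<in> X \<and> v \<notin> X) \<or> (u \<notin> X \<and> v \<in> X) then \<not> E u v else E u v)"

datatype vtx = HV nat | AV nat | BV nat | CV nat

definition Gverts :: "nat \<Rightarrow> vtx set" where
  "Gverts k = HV ` {..<3*k-1} \<union> AV ` {..k} \<union> BV ` {..k} \<union> CV ` {1..k-1}"

text \<open>Generating (directed) edge list; the adjacency is its symmetric closure.\<close>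
fun gedge :: "nat \<Rightarrow> vtx \<Rightarrow> vtx \<Rightarrow> bool" where
  "gedge k (HV i) (HV j) = (i < 3*k-1 \<and> j < 3*k-1 \<and>
      (int j - int i) mod int (3*k-1) \<in> {int k..int (2*k-1)})"
| "gedge k (AV i) (AV j) = (i \<le> k \<and> j \<le> k \<and> i \<noteq> j)"
| "gedge k (AV i) (BV j) = (i \<le> k \<and> j \<le> k \<and> i \<noteq> j)"
| "gedge k (CV i) (HV j) = (1 \<le> i \<and> i \<le> k-1 \<and> (j = 0 \<or> (k \<le> j \<and> j \<le> 3*k-2)))"
| "gedge k (BV i) (HV j) =
     ((i \<le> k-1 \<and> 1 \<le> j \<and> j \<le> k-1)
    \<or> (i = k \<and> 2*k \<le> j \<and> j \<le> 3*k-2)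
    \<or> (1 \<le> i \<and> i \<le> k \<and> j = k+i-1)
    \<or> (i = 0 \<and> j = 0))"
| "gedge k _ _ = False"

definition G_adj :: "nat \<Rightarrow> vtx \<Rightarrow> vtx \<Rightarrow> bool" where
  "G_adj k u v \<longleftrightarrow> gedge k u v \<or> gedge k v u"

definition Xset :: "nat \<Rightarrow> vtx set" where
  "Xset k = AV ` {..k} \<union> HV ` {..<3*k-1}"

definition G'_adj :: "nat \<Rightarrow> vtx \<Rightarrow> vtx \<Rightarrow> bool" where
  "G'_adj k = gm_switch (Gverts k) (G_adj k) (Xset k)"

end

theory Submission
  imports Defs
begin

text \<open>Both bounds come from explicit forcing sets together with an explicit chronological
list of forces.  Indices of H are taken mod 3k-1, so H-vertex i sees i+k, ..., i+2k-1.

In G start from H-vertices k-1, ..., 3k-2, all of C and a_2, ..., a_k (4k-2 vertices).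
Then 3k-2 forces b_k, c_1 forces 0, and 2k-1+j forces j for j = k-2 down to 1, after which
H is blue.  Now k+i-1 forces b_i (1 \<le> i \<le> k-1), 0 forces b_0, b_0 forces a_1 and
b_1 forces a_0.

In G' start from H-vertices 0, ..., 2k-3, all of C and a_1, ..., a_k (4k-3 vertices).
After the switching c_1 sees all of A and only 1, ..., k-1 in H, so it forces a_0; the only
neighbour of a_i outside A is b_i, which it forces; b_k now sees a_k and 0, ..., 2k-2, so
it forces 2k-2; finally t forces 2k-1+t for t = 0, ..., k-1.\<close>

definition can_force :: "'a set \<Rightarrow> ('a \<Rightarrow> 'a \<Rightarrow> bool) \<Rightarrow> 'a set \<Rightarrow> 'a \<Rightarrow> 'a \<Rightarrow> bool" where
  "can_force V E Bl u w \<longleftrightarrow> u \<in> Bl \<and> w \<in> V \<and> E u w \<and> (\<forall>x\<in>V. E u x \<and> x \<noteq> w \<longrightarrow> x \<in> Bl)"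

lemma can_force_rtranclp_force_step:
  assumes "can_force V E Bl u w"
  shows "(force_step V E)\<^sup>*\<^sup>* Bl (insert w Bl)"
proof (cases "w \<in> Bl")
  case False
  with assms have "force_step V E Bl (insert w Bl)"
    unfolding can_force_def force_step_def by blast
  then show ?thesis by blast
qed (simp add: insert_absorb)

lemma can_force_chain_rtranclp_force_step:
  fixes F :: "nat \<Rightarrow> 'a set"
  assumes "\<And>t. t < m \<Longrightarrow> can_force V E (F t) (u t) (w t)"
    and "\<And>t. t < m \<Longrightarrow> F (Suc t) = insert (w t) (F t)"
  shows "(force_step V E)\<^sup>*\<^sup>* (F 0) (F m)"
  using assms
proof (induction m)
  case (Suc m)
  have "(force_step V E)\<^sup>*\<^sup>* (F 0) (F m)"
    using Suc.prems by (intro Suc.IH) simp_all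
  moreover have "(force_step V E)\<^sup>*\<^sup>* (F m) (F (Suc m))"
    using can_force_rtranclp_force_step[OF Suc.prems(1)] Suc.prems(2) by simp
  ultimately show ?case
    by (rule rtranclp_trans)
qed simp

lemma zero_forcing_number_le_card:
  assumes "zero_forcing_set V E S"
  shows "zero_forcing_number V E \<le> card S"
  unfolding zero_forcing_number_def using assms by (auto intro: Least_le)

lemma int_diff_mod_eq:
  assumes "i < n" "j < n"
  shows "(int j - int i) mod int n = (if i \<le> j then int j - int i else int j - int i + int n)"
proof (cases "i \<le> j")
  case False
  have "(int j - int i) mod int n = (int j - int i + int n) mod int n" by simp
  also have "\<dots> = int j - int i + int n"
    using assms False by (intro mod_pos_pos_trivial) auto
  finally show ?thesis using False by simp
qed (use assms in auto)

lemma gedge_HV_HV_iff: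
  "gedge k (HV i) (HV j) \<longleftrightarrow> i < 3*k-1 \<and> j < 3*k-1 \<and>
     ((i + k \<le> j \<and> j < i + 2*k) \<or> (j + k \<le> i \<and> i < j + 2*k))"
proof (cases "i < 3*k-1 \<and> j < 3*k-1")
  case True
  then have "(int j - int i) mod int (3*k-1) =
      (if i \<le> j then int j - int i else int j - int i + int (3*k-1))"
    by (intro int_diff_mod_eq) auto
  with True show ?thesis by auto
qed auto

declare gedge.simps(1)[simp del] gedge_HV_HV_iff[simp]

lemma card_HV_CV_AV_image:
  assumes "finite A" "finite B" "finite C"
  shows "card (HV ` A \<union> CV ` B \<union> AV ` C) = card A + card B + card C"
proof -
  have "card (HV ` A \<union> CV ` B \<union> AV ` C) = card (HV ` A \<union> CV ` B) + card (AV ` C)"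
    by (rule card_Un_disjoint) (use assms in auto)
  also have "card (HV ` A \<union> CV ` B) = card (HV ` A) + card (CV ` B)"
    by (rule card_Un_disjoint) (use assms in auto)
  finally show ?thesis
    by (simp add: card_image inj_on_def)
qed

lemma vtx_image_iff [simp]:
  "HV i \<in> HV ` A \<longleftrightarrow> i \<in> A" "AV i \<in> AV ` A \<longleftrightarrow> i \<in> A"
  "BV i \<in> BV ` A \<longleftrightarrow> i \<in> A" "CV i \<in> CV ` A \<longleftrightarrow> i \<in> A"
  "HV i \<notin> AV ` A" "HV i \<notin> BV ` A" "HV i \<notin> CV ` A"
  "AV i \<notin> HV ` A" "AV i \<notin> BV ` A" "AV i \<notin> CV ` A"
  "BV i \<notin> HV ` A" "BV i \<notin> AV ` A" "BV i \<notin> CV ` A"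
  "CV i \<notin> HV ` A" "CV i \<notin> AV ` A" "CV i \<notin> BV ` A"
  by auto

definition G_forcing_set :: "nat \<Rightarrow> vtx set" where
  "G_forcing_set k = HV ` {k-1..3*k-2} \<union> CV ` {1..k-1} \<union> AV ` {2..k}"

lemma card_G_forcing_set:
  assumes "k \<ge> 2"
  shows "card (G_forcing_set k) = 4*k-2"
  using assms by (simp add: G_forcing_set_def card_HV_CV_AV_image)

lemma zero_forcing_set_G:
  assumes k: "k \<ge> 2"
  shows "zero_forcing_set (Gverts k) (G_adj k) (G_forcing_set k)"
proof -
  note rtranclp_trans[trans]
  let ?forces = "(force_step (Gverts k) (G_adj k))\<^sup>*\<^sup>*"
  let ?can_force = "can_force (Gverts k) (G_adj k)"
  define S0 where "S0 = G_forcing_set k"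
  define S1 where "S1 = insert (HV 0) (insert (BV k) S0)"
  define S2 where "S2 = S1 \<union> HV ` {1..k-2}"
  define S3 where "S3 = S2 \<union> BV ` {1..k-1}"
  define S4 where "S4 = insert (AV 0) (insert (AV 1) (insert (BV 0) S3))"
  note defs = can_force_def S4_def S3_def S2_def S1_def S0_def G_forcing_set_def G_adj_def Gverts_def
  have "?forces S0 (insert (BV k) S0)"
    by (rule can_force_rtranclp_force_step[where u = "HV (3*k-2)"]) (use k in \<open>auto simp: defs\<close>)
  also have "?forces \<dots> S1"
    unfolding S1_def
    by (rule can_force_rtranclp_force_step[where u = "CV 1"]) (use k in \<open>auto simp: defs\<close>)
  also have "?forces S1 S2"
  proof -
    define F where "F t = S1 \<union> HV ` {k-1-t..k-2}" for t
    have "?forces (F 0) (F (k-2))"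
    proof (rule can_force_chain_rtranclp_force_step)
      fix t assume "t < k-2"
      \<comment> \<open>with k = t + d + 3 the truncated differences k-2-t, 3*k-3-t, ... simplify away\<close>
      then obtain d where d: "k = t + d + 3"
        by (intro that[of "k - t - 3"]) simp
      show "?can_force (F t) (HV (3*k-3-t)) (HV (k-2-t))"
        by (auto simp: F_def defs d)
      show "F (Suc t) = insert (HV (k-2-t)) (F t)"
        by (auto simp: F_def d)
    qed
    moreover have "F 0 = S1" "F (k-2) = S2"
      unfolding F_def S2_def using k by auto
    ultimately show ?thesis by simp
  qed
  also have "?forces S2 S3"
  proof -
    define F where "F t = S2 \<union> BV ` {1..t}" for t
    have "?forces (F 0) (F (k-1))"
      by (rule can_force_chain_rtranclp_force_step[where u = "\<lambda>t. HV (k+t)" and w = "\<lambda>t. BV (Suc t)"])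
        (use k in \<open>auto simp: F_def defs\<close>)
    moreover have "F 0 = S2" "F (k-1) = S3"
      unfolding F_def S3_def by auto
    ultimately show ?thesis by simp
  qed
  also have "?forces S3 (insert (BV 0) S3)"
    by (rule can_force_rtranclp_force_step[where u = "HV 0"]) (use k in \<open>auto simp: defs\<close>)
  also have "?forces \<dots> (insert (AV 1) (insert (BV 0) S3))"
    by (rule can_force_rtranclp_force_step[where u = "BV 0"]) (use k in \<open>auto simp: defs\<close>)
  also have "?forces \<dots> S4"
    unfolding S4_def
    by (rule can_force_rtranclp_force_step[where u = "BV 1"]) (use k in \<open>auto simp: defs\<close>)
  also have "S4 = Gverts k"
  proof (rule set_eqI)
    show "x \<in> S4 \<longleftrightarrow> x \<in> Gverts k" for x
      by (cases x) (use k in \<open>auto simp: defs\<close>)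
  qed
  finally show ?thesis
    unfolding zero_forcing_set_def S0_def G_forcing_set_def using k by (auto simp: Gverts_def)
qed

definition G'_forcing_set :: "nat \<Rightarrow> vtx set" where
  "G'_forcing_set k = HV ` {..<2*k-2} \<union> CV ` {1..k-1} \<union> AV ` {1..k}"

lemma card_G'_forcing_set:
  assumes "k \<ge> 2"
  shows "card (G'_forcing_set k) = 4*k-3"
  using assms by (simp add: G'_forcing_set_def card_HV_CV_AV_image)

lemma zero_forcing_set_G':
  assumes k: "k \<ge> 2"
  shows "zero_forcing_set (Gverts k) (G'_adj k) (G'_forcing_set k)"
proof -
  note rtranclp_trans[trans]
  let ?forces = "(force_step (Gverts k) (G'_adj k))\<^sup>*\<^sup>*"
  define T0 where "T0 = G'_forcing_set k"
  define T1 where "T1 = insert (AV 0) T0"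
  define T2 where "T2 = T1 \<union> BV ` {..k}"
  define T3 where "T3 = insert (HV (2*k-2)) T2"
  note defs = can_force_def T3_def T2_def T1_def T0_def G'_forcing_set_def
    G'_adj_def gm_switch_def G_adj_def Xset_def Gverts_def
  have "?forces T0 T1"
    unfolding T1_def
    by (rule can_force_rtranclp_force_step[where u = "CV 1"]) (use k in \<open>auto simp: defs\<close>)
  also have "?forces T1 T2"
  proof -
    define F where "F t = T1 \<union> BV ` {..<t}" for t
    have "?forces (F 0) (F (k+1))"
      by (rule can_force_chain_rtranclp_force_step[where u = AV and w = BV])
        (use k in \<open>auto simp: F_def defs\<close>)
    moreover have "F 0 = T1" "F (k+1) = T2"
      unfolding F_def T2_def by auto
    ultimately show ?thesis by simp
  qed
  also have "?forces T2 T3"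
    unfolding T3_def
    by (rule can_force_rtranclp_force_step[where u = "BV k"]) (use k in \<open>auto simp: defs\<close>)
  also have "?forces T3 (Gverts k)"
  proof -
    define F where "F t = T3 \<union> HV ` {2*k-1..<2*k-1+t}" for t
    have "?forces (F 0) (F k)"
      by (rule can_force_chain_rtranclp_force_step[where u = HV and w = "\<lambda>t. HV (2*k-1+t)"])
        (use k in \<open>auto simp: F_def defs\<close>)
    moreover have "F k = Gverts k"
    proof (rule set_eqI)
      show "x \<in> F k \<longleftrightarrow> x \<in> Gverts k" for x
        by (cases x) (use k in \<open>auto simp: F_def defs\<close>)
    qed
    ultimately show ?thesis
      unfolding F_def by simp
  qed
  finally show ?thesis
    unfolding zero_forcing_set_def T0_def G'_forcing_set_def using k by (auto simp: Gverts_def)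
qed

theorem lemma5p7:
  fixes k :: nat
  assumes "k \<ge> 2"
  shows "zero_forcing_number (Gverts k) (G_adj k) \<le> 4*k-2 \<and>
         zero_forcing_number (Gverts k) (G'_adj k) \<le> 4*k-3"
  using zero_forcing_number_le_card[OF zero_forcing_set_G[OF assms]]
    zero_forcing_number_le_card[OF zero_forcing_set_G'[OF assms]]
  by (simp add: card_G_forcing_set[OF assms] card_G'_forcing_set[OF assms])

end
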